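(* Let $d$ be a non-negative integer, $Z$ a finite abelian group, $\mu$ the Haar probability measure on $\mathbb{T}^d\times Z$, and let $A,B\subset \mathbb{T}^d\times Z$ be closed sets. For a set $S\subset\mathbb{T}^d\times Z$ and positive integer $n$ let $S_n=S+\big([-\tfrac1n,\tfrac1n]^d\times\{0_Z\}\big)$. Then $\mu(A_n+B_n)\to\mu(A+B)$ as $n\to\infty$.
   Context: $\mathbb{T}=\mathbb{R}/\mathbb{Z}$, identified as a set with $[0,1)$. *)

theory Defs
  imports "HOL-Analysis.Analysis"
begin

text \<open>The circle T = R/Z is identified with [0,1). A point of T^d is an
  extensional function on {..<d} with values in [0,1) (undefined outside).\<close>

definition torus :: "nat \<Rightarrow> (nat \<Rightarrow> real) set" where
  "torus d = PiE {..<d} (\<lambda>_. {0..<1})"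

text \<open>Quotient map R^d -> T^d (R^d represented as nat => real, only the first d
  coordinates matter).\<close>
definition tproj :: "nat \<Rightarrow> (nat \<Rightarrow> real) \<Rightarrow> (nat \<Rightarrow> real)" where
  "tproj d v = restrict (\<lambda>i. frac (v i)) {..<d}"

definition gadd :: "nat \<Rightarrow> (nat \<Rightarrow> real) \<times> 'z::ab_group_add \<Rightarrow> (nat \<Rightarrow> real) \<times> 'z \<Rightarrow> (nat \<Rightarrow> real) \<times> 'z" where
  "gadd d p q = (tproj d (\<lambda>i. fst p i + fst q i), snd p + snd q)"

definition sumset :: "nat \<Rightarrow> ((nat \<Rightarrow> real) \<times> 'z::ab_group_add) set \<Rightarrow> ((nat \<Rightarrow> real) \<times> 'z) set \<Rightarrow> ((nat \<Rightarrow> real) \<times> 'z) set" where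
  "sumset d A B = {gadd d a b | a b. a \<in> A \<and> b \<in> B}"

definition box :: "nat \<Rightarrow> nat \<Rightarrow> ((nat \<Rightarrow> real) \<times> 'z::ab_group_add) set" where
  "box d n = {(tproj d e, 0) | e. \<forall>i<d. \<bar>e i\<bar> \<le> 1 / real n}"

definition thicken :: "nat \<Rightarrow> nat \<Rightarrow> ((nat \<Rightarrow> real) \<times> 'z::ab_group_add) set \<Rightarrow> ((nat \<Rightarrow> real) \<times> 'z) set" where
  "thicken d n S = sumset d S (box d n)"

text \<open>Closed subsets of T^d x Z (Z discrete): quotient topology, i.e. each fibre
  pulled back to R^d is closed (product topology on nat => real; only the
  first d coordinates are involved).\<close>
definition torus_closed :: "nat \<Rightarrow> ((nat \<Rightarrow> real) \<times> 'z) set \<Rightarrow> bool" where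
  "torus_closed d A \<longleftrightarrow> A \<subseteq> torus d \<times> UNIV \<and>
     (\<forall>z. closed {v :: nat \<Rightarrow> real. (tproj d v, z) \<in> A})"

definition haar :: "nat \<Rightarrow> ((nat \<Rightarrow> real) \<times> 'z::finite) measure" where
  "haar d = (PiM {..<d} (\<lambda>_. restrict_space lborel {0..<1::real}))
              \<Otimes>\<^sub>M uniform_count_measure (UNIV :: 'z set)"

end

(*
  Up to the finite factor Z, closed subsets of T^d x Z are compact, so the sumset of two
  closed sets is closed: lifting its fibres to R^d, each one is the projection of a closed
  set along a compact cube.  The sets (A_n + B_n) decrease in n, and their intersection is
  A + B, because a point of every A_n + B_n lies within 2/n of the closed set A + B.
  Continuity from above of the finite Haar measure then gives the limit.
*)

theory Submission
  imports Defs "HOL-Probability.Probability"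
begin

lemma compact_PiE_UNIV:
  fixes S :: "'i \<Rightarrow> 'a::topological_space set"
  assumes "\<And>i. compact (S i)"
  shows "compact (PiE UNIV S)"
  using compactin_PiE[of "\<lambda>_. euclidean" UNIV S] assms
  by (simp add: euclidean_product_topology)

lemma tendsto_componentwise_iff:
  fixes f :: "'a \<Rightarrow> 'i \<Rightarrow> 'b::topological_space"
  shows "(f \<longlongrightarrow> l) F \<longleftrightarrow> (\<forall>i. ((\<lambda>x. f x i) \<longlongrightarrow> l i) F)"
  using limitin_componentwise[of "\<lambda>_. euclidean" UNIV f l F]
  by (simp add: euclidean_product_topology)

lemma closed_fst_image_compact:
  fixes F :: "('a::topological_space \<times> 'b::topological_space) set"
  assumes "closed F" and "compact C"
  shows "closed (fst ` (F \<inter> UNIV \<times> C))"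
proof -
  have top: "prod_topology euclidean (top_of_set C) = top_of_set (UNIV \<times> C)"
    by (simp add: prod_topology_subtopology(2))
  have "closed_map (top_of_set (UNIV \<times> C)) euclidean fst"
    using closed_map_fst[of "top_of_set C" euclidean] assms(2)
    by (simp add: top compact_space_subtopology)
  moreover have "closedin (top_of_set (UNIV \<times> C)) (F \<inter> UNIV \<times> C)"
    using assms(1) by (metis closedin_closed_Int Int_commute)
  ultimately show ?thesis
    unfolding closed_map_def closed_closedin by (elim allE impE)
qed

lemma closed_componentwise_approx:
  fixes F :: "('i \<Rightarrow> real) set"
  assumes "closed F" and "\<And>n. w n \<in> F" and "\<And>n i. \<bar>w n i - x i\<bar> \<le> c / real (Suc n)"
  shows "x \<in> F"
proof -
  have "w \<longlonglongrightarrow> x"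
    unfolding tendsto_componentwise_iff
  proof
    fix i
    have "(\<lambda>n. c / real (Suc n)) \<longlonglongrightarrow> 0"
      by (rule LIMSEQ_Suc[OF lim_const_over_n])
    then have "(\<lambda>n. w n i - x i) \<longlonglongrightarrow> 0"
      by (rule Lim_null_comparison[rotated]) (use assms(3) in \<open>auto intro: always_eventually\<close>)
    then show "(\<lambda>n. w n i) \<longlonglongrightarrow> x i"
      by (rule LIM_zero_cancel)
  qed
  then show ?thesis
    using assms(1,2) closed_sequentially by blast
qed

lemma frac_eq_iff: "frac x = frac y \<longleftrightarrow> x - y \<in> \<int>"
proof -
  have "frac x = frac y \<longleftrightarrow> x - frac y \<in> \<int>"
    by (simp add: frac_unique_iff frac_lt_1)
  also have "x - frac y = (x - y) + of_int \<lfloor>y\<rfloor>"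
    by (simp add: frac_def)
  finally show ?thesis
    by (metis Ints_add Ints_diff Ints_of_int add_diff_cancel_right')
qed

lemma tproj_eq_iff: "tproj d v = tproj d w \<longleftrightarrow> (\<forall>i<d. v i - w i \<in> \<int>)"
proof -
  have "tproj d v = tproj d w \<longleftrightarrow> (\<forall>i<d. frac (v i) = frac (w i))"
    unfolding tproj_def by (auto simp: restrict_def fun_eq_iff split: if_splits)
  then show ?thesis
    by (simp add: frac_eq_iff)
qed

definition cube :: "real \<Rightarrow> (nat \<Rightarrow> real) set" where
  "cube r = {x. \<forall>i. \<bar>x i\<bar> \<le> r}"

lemma compact_cube: "compact (cube r)"
proof -
  have "cube r = PiE UNIV (\<lambda>_. {-r..r})"
    by (auto simp: cube_def PiE_UNIV_domain Pi_iff abs_le_iff minus_le_iff)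
  then show ?thesis
    by (simp add: compact_PiE_UNIV)
qed

lemma ex_cube_tproj_eq:
  assumes "0 \<le> r" and "\<And>i. i < d \<Longrightarrow> \<bar>x i\<bar> \<le> r"
  shows "\<exists>y\<in>cube r. tproj d y = tproj d x"
proof
  show "(\<lambda>i. if i < d then x i else 0) \<in> cube r"
    using assms by (simp add: cube_def)
qed (simp add: tproj_eq_iff)

lemma tproj_in_torus: "tproj d v \<in> torus d"
  by (auto simp: tproj_def torus_def frac_lt_1)

lemma tproj_torus: "x \<in> torus d \<Longrightarrow> tproj d x = x"
  by (fastforce simp: tproj_def torus_def PiE_def extensional_def restrict_def fun_eq_iff Pi_def)

lemma torus_subset_tproj_cube: "torus d \<subseteq> tproj d ` cube 1"
proof
  fix p assume p: "p \<in> torus d"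
  then have "\<bar>p i\<bar> \<le> 1" if "i < d" for i
    using that by (auto simp: torus_def PiE_def Pi_def)
  then show "p \<in> tproj d ` cube 1"
    using ex_cube_tproj_eq[of 1 d p] tproj_torus[OF p] by (auto simp: image_iff)
qed

lemma tproj_add_tproj: "tproj d (\<lambda>i. tproj d u i + tproj d v i) = tproj d (\<lambda>i. u i + v i)"
  unfolding tproj_eq_iff
proof (intro allI impI)
  fix i assume "i < d"
  then have "tproj d u i + tproj d v i - (u i + v i) = - of_int (\<lfloor>u i\<rfloor> + \<lfloor>v i\<rfloor>)"
    by (simp add: tproj_def frac_def)
  then show "tproj d u i + tproj d v i - (u i + v i) \<in> \<int>"
    by simp
qed

lemma gadd_tproj: "gadd d (tproj d x, y) (tproj d x', y') = (tproj d (\<lambda>i. x i + x' i), y + y')"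
  by (simp add: gadd_def tproj_add_tproj)

definition fibre :: "nat \<Rightarrow> ((nat \<Rightarrow> real) \<times> 'z) set \<Rightarrow> 'z \<Rightarrow> (nat \<Rightarrow> real) set" where
  "fibre d S z = {v. (tproj d v, z) \<in> S}"

lemma torus_closed_iff:
  "torus_closed d S \<longleftrightarrow> S \<subseteq> torus d \<times> UNIV \<and> (\<forall>z. closed (fibre d S z))"
  by (simp add: torus_closed_def fibre_def)

lemma closed_vimage_tproj_image:
  fixes g :: "'a::topological_space \<Rightarrow> nat \<Rightarrow> real"
  assumes "compact C" and "continuous_on UNIV g"
  shows "closed (tproj d -` (\<lambda>c. tproj d (g c)) ` C)"
proof -
  let ?R = "\<Inter>i<d. {p :: (nat \<Rightarrow> real) \<times> 'a. fst p i - g (snd p) i \<in> \<int>}"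
  have "continuous_on UNIV (\<lambda>p :: (nat \<Rightarrow> real) \<times> 'a. fst p i - g (snd p) i)" for i
  proof (rule continuous_on_diff)
    show "continuous_on UNIV (\<lambda>p :: (nat \<Rightarrow> real) \<times> 'a. fst p i)"
      by (rule continuous_on_product_then_coordinatewise[OF continuous_on_fst[OF continuous_on_id]])
    show "continuous_on UNIV (\<lambda>p :: (nat \<Rightarrow> real) \<times> 'a. g (snd p) i)"
      by (rule continuous_on_product_then_coordinatewise[OF continuous_on_compose2[OF assms(2)
            continuous_on_snd[OF continuous_on_id]]]) simp
  qed
  then have "closed ?R"
    using continuous_closed_preimage[OF _ closed_UNIV closed_Ints] by (auto simp: vimage_def)
  moreover have "tproj d -` (\<lambda>c. tproj d (g c)) ` C = fst ` (?R \<inter> UNIV \<times> C)"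
  proof (intro equalityI subsetI)
    fix v assume "v \<in> tproj d -` (\<lambda>c. tproj d (g c)) ` C"
    then obtain c where "c \<in> C" "tproj d v = tproj d (g c)"
      by auto
    then show "v \<in> fst ` (?R \<inter> UNIV \<times> C)"
      by (intro image_eqI[of _ _ "(v, c)"]) (auto simp: tproj_eq_iff)
  next
    fix v assume "v \<in> fst ` (?R \<inter> UNIV \<times> C)"
    then obtain c where "c \<in> C" "tproj d v = tproj d (g c)"
      by (auto simp: tproj_eq_iff)
    then show "v \<in> tproj d -` (\<lambda>c. tproj d (g c)) ` C"
      by auto
  qed
  ultimately show ?thesis
    using closed_fst_image_compact[OF _ assms(1)] by simp
qed

lemma torus_closed_box: "torus_closed d (box d n)"
  unfolding torus_closed_iff
proof (intro conjI allI)
  show "box d n \<subseteq> torus d \<times> UNIV"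
    by (auto simp: box_def tproj_in_torus)
  fix z
  have box_eq: "{tproj d e |e. \<forall>i<d. \<bar>e i\<bar> \<le> 1 / real n} = tproj d ` cube (1 / real n)"
  proof (intro equalityI subsetI)
    fix p assume "p \<in> {tproj d e |e. \<forall>i<d. \<bar>e i\<bar> \<le> 1 / real n}"
    then obtain e where e: "\<forall>i<d. \<bar>e i\<bar> \<le> 1 / real n" "p = tproj d e"
      by blast
    obtain c where "c \<in> cube (1 / real n)" "tproj d c = tproj d e"
      using ex_cube_tproj_eq[of "1 / real n" d e] e(1) by auto
    then show "p \<in> tproj d ` cube (1 / real n)"
      using e(2) by (metis image_eqI)
  qed (auto simp: cube_def)
  have "fibre d (box d n) z
      = (if z = 0 then tproj d -` {tproj d e |e. \<forall>i<d. \<bar>e i\<bar> \<le> 1 / real n} else {})"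
    by (auto simp: fibre_def box_def)
  then show "closed (fibre d (box d n) z)"
    using closed_vimage_tproj_image[OF compact_cube continuous_on_id] by (simp add: box_eq)
qed

lemma sumset_subset_torus: "sumset d A B \<subseteq> torus d \<times> UNIV"
  by (auto simp: sumset_def gadd_def tproj_in_torus)

lemma fibre_sumset:
  assumes "A \<subseteq> torus d \<times> UNIV" and "B \<subseteq> torus d \<times> UNIV"
  shows "fibre d (sumset d A B) z = (\<Union>z'. tproj d -` (\<lambda>p. tproj d (\<lambda>i. fst p i + snd p i)) `
           ((fibre d A z' \<inter> cube 1) \<times> (fibre d B (z - z') \<inter> cube 1)))"
    (is "_ = (\<Union>z'. tproj d -` ?h ` ?C z')")
proof (intro equalityI subsetI)
  fix v assume "v \<in> fibre d (sumset d A B) z"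
  then obtain a b where ab: "a \<in> A" "b \<in> B" "(tproj d v, z) = gadd d a b"
    by (auto simp: fibre_def sumset_def)
  then have "fst a \<in> torus d" "fst b \<in> torus d"
    using assms by auto
  then have "fst a \<in> tproj d ` cube 1" "fst b \<in> tproj d ` cube 1"
    using torus_subset_tproj_cube by auto
  then obtain x y where xy: "x \<in> cube 1" "tproj d x = fst a" "y \<in> cube 1" "tproj d y = fst b"
    by (elim imageE) simp
  have "gadd d a b = (?h (x, y), snd a + snd b)"
    using gadd_tproj[of d x "snd a" y "snd b"] xy by simp
  then have "tproj d v = ?h (x, y)" and "snd b = z - snd a"
    using ab(3) by (auto simp: algebra_simps)
  moreover have "(x, y) \<in> ?C (snd a)"
    using ab xy by (simp add: fibre_def flip: \<open>snd b = z - snd a\<close>)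
  ultimately show "v \<in> (\<Union>z'. tproj d -` ?h ` ?C z')"
    by blast
next
  fix v assume "v \<in> (\<Union>z'. tproj d -` ?h ` ?C z')"
  then obtain z' x y where "(x, y) \<in> ?C z'" "tproj d v = ?h (x, y)"
    by auto
  then have "(tproj d x, z') \<in> A" "(tproj d y, z - z') \<in> B"
      and "gadd d (tproj d x, z') (tproj d y, z - z') = (tproj d v, z)"
    by (auto simp: fibre_def gadd_tproj)
  then show "v \<in> fibre d (sumset d A B) z"
    unfolding fibre_def sumset_def by (metis (mono_tags, lifting) mem_Collect_eq)
qed

lemma torus_closed_sumset:
  fixes A B :: "((nat \<Rightarrow> real) \<times> 'z::{ab_group_add, finite}) set"
  assumes A: "torus_closed d A" and B: "torus_closed d B"
  shows "torus_closed d (sumset d A B)"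
proof -
  have "continuous_on UNIV (\<lambda>p :: (nat \<Rightarrow> real) \<times> (nat \<Rightarrow> real). \<lambda>i. fst p i + snd p i)"
    by (rule continuous_on_coordinatewise_then_product continuous_on_add
        continuous_on_product_then_coordinatewise[OF continuous_on_fst[OF continuous_on_id]]
        continuous_on_product_then_coordinatewise[OF continuous_on_snd[OF continuous_on_id]])+
  moreover have "compact ((fibre d A z' \<inter> cube 1) \<times> (fibre d B z'' \<inter> cube 1))" for z' z''
    using A B by (auto simp: torus_closed_iff intro!: compact_Times closed_Int_compact compact_cube)
  ultimately show ?thesis
    using A B sumset_subset_torus
    by (simp add: torus_closed_iff fibre_sumset closed_UN closed_vimage_tproj_image)
qed

lemma torus_closed_thicken:
  fixes S :: "((nat \<Rightarrow> real) \<times> 'z::{ab_group_add, finite}) set"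
  shows "torus_closed d S \<Longrightarrow> torus_closed d (thicken d n S)"
  unfolding thicken_def using torus_closed_sumset torus_closed_box by blast

lemma prob_space_haar: "prob_space (haar d)"
proof -
  have "prob_space (restrict_space lborel {0..<1::real})"
    by (rule prob_spaceI) (simp add: emeasure_restrict_space space_restrict_space)
  then show ?thesis
    unfolding haar_def
    by (intro prob_space_pair prob_space_PiM prob_space_uniform_count_measure) auto
qed

lemma borel_measurable_torus_id:
  "(\<lambda>x. x) \<in> borel_measurable (PiM {..<d::nat} (\<lambda>_. restrict_space lborel {0..<1::real}))"
proof -
  let ?M = "PiM {..<d} (\<lambda>_. restrict_space lborel {0..<1::real})"
  have "(\<lambda>x. x i) \<in> borel_measurable ?M" for i
  proof (cases "i < d")
    case True
    then have "(\<lambda>x. x i) \<in> measurable ?M (restrict_space lborel {0..<1})"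
      by (intro measurable_component_singleton) auto
    then show ?thesis
      by (simp add: measurable_restrict_space2_iff)
  next
    case False
    show ?thesis
    proof (subst measurable_cong)
      fix x assume "x \<in> space ?M"
      then show "x i = (\<lambda>_. undefined) x"
        using False by (auto simp: space_PiM PiE_def extensional_def)
    qed simp
  qed
  then show ?thesis
    using measurable_coordinatewise_then_product[of "\<lambda>x. x" ?M] by simp
qed

lemma sets_haar_torus_closed:
  fixes S :: "((nat \<Rightarrow> real) \<times> 'z::{ab_group_add, finite}) set"
  assumes "torus_closed d S"
  shows "S \<in> sets (haar d)"
proof -
  let ?M = "PiM {..<d} (\<lambda>_. restrict_space lborel {0..<1::real})"
  have space: "space ?M = torus d"
    by (simp add: space_PiM space_restrict_space torus_def)
  have "fibre d S z \<inter> torus d \<in> sets ?M" for z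
    using measurable_sets[OF borel_measurable_torus_id, of "fibre d S z" d] assms
    by (simp add: torus_closed_iff space)
  then have "(\<Union>z. (fibre d S z \<inter> torus d) \<times> {z}) \<in> sets (?M \<Otimes>\<^sub>M uniform_count_measure UNIV)"
    by (intro sets.finite_UN pair_measureI) auto
  moreover have "S = (\<Union>z. (fibre d S z \<inter> torus d) \<times> {z})"
    using assms by (auto simp: torus_closed_iff fibre_def tproj_torus)
  ultimately show ?thesis
    by (simp add: haar_def)
qed

lemma sumset_mono: "A \<subseteq> A' \<Longrightarrow> B \<subseteq> B' \<Longrightarrow> sumset d A B \<subseteq> sumset d A' B'"
  unfolding sumset_def by blast

lemma box_antimono:
  assumes "0 < m" and "m \<le> n"
  shows "box d n \<subseteq> box d m"
proof -
  have "1 / real n \<le> 1 / real m"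
    using assms by (simp add: frac_le)
  then show ?thesis
    by (force simp: box_def)
qed

lemma thicken_antimono: "0 < m \<Longrightarrow> m \<le> n \<Longrightarrow> thicken d n S \<subseteq> thicken d m S"
  unfolding thicken_def by (intro sumset_mono order_refl box_antimono)

lemma subset_thicken:
  assumes "S \<subseteq> torus d \<times> UNIV"
  shows "S \<subseteq> thicken d n S"
proof
  fix p assume "p \<in> S"
  then have "p = gadd d (tproj d (fst p), snd p) (tproj d (\<lambda>_. 0), 0)"
    using assms by (auto simp: gadd_tproj tproj_torus)
  moreover have "(tproj d (\<lambda>_. 0), 0) \<in> box d n"
    by (auto simp: box_def)
  ultimately show "p \<in> thicken d n S"
    using \<open>p \<in> S\<close> assms unfolding thicken_def sumset_def by (force simp: tproj_torus)
qed

lemma sumset_thicken_approx: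
  assumes "x \<in> sumset d (thicken d n A) (thicken d n B)"
  obtains w where "w \<in> fibre d (sumset d A B) (snd x)"
    and "\<And>i. \<bar>w i - (if i < d then fst x i else 0)\<bar> \<le> 2 / real n"
proof -
  obtain a b e f where ab: "a \<in> A" "b \<in> B" and "e \<in> box d n" "f \<in> box d n"
    and x: "x = gadd d (gadd d a e) (gadd d b f)"
    using assms by (auto simp: sumset_def thicken_def)
  then obtain \<epsilon> \<phi> where ef: "e = (tproj d \<epsilon>, 0)" "f = (tproj d \<phi>, 0)"
    and bounds: "\<And>i. i < d \<Longrightarrow> \<bar>\<epsilon> i\<bar> \<le> 1 / real n \<and> \<bar>\<phi> i\<bar> \<le> 1 / real n"
    by (auto simp: box_def)
  define w where "w i = (if i < d then fst x i - \<epsilon> i - \<phi> i else 0)" for i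
  have "w i - (fst a i + fst b i) \<in> \<int>" if "i < d" for i
  proof -
    let ?s = "fst a i + \<epsilon> i + (fst b i + \<phi> i)"
    have "fst x i = frac ?s"
      using that by (simp add: x ef gadd_def tproj_def)
    then have "w i - (fst a i + fst b i) = - of_int \<lfloor>?s\<rfloor>"
      using that by (simp add: w_def frac_def)
    then show ?thesis
      by simp
  qed
  then have "(tproj d w, snd x) = gadd d a b"
    by (simp add: x ef gadd_def tproj_eq_iff)
  then have "w \<in> fibre d (sumset d A B) (snd x)"
    using ab unfolding fibre_def sumset_def by blast
  moreover have "\<bar>w i - (if i < d then fst x i else 0)\<bar> \<le> 2 / real n" for i
    using bounds[of i] by (auto simp: w_def)
  ultimately show ?thesis
    using that by blast
qed

lemma Inter_sumset_thicken:
  fixes A B :: "((nat \<Rightarrow> real) \<times> 'z::{ab_group_add, finite}) set"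
  assumes A: "torus_closed d A" and B: "torus_closed d B"
  shows "(\<Inter>n. sumset d (thicken d (Suc n) A) (thicken d (Suc n) B)) = sumset d A B"
proof (intro equalityI subsetI)
  fix x assume x: "x \<in> (\<Inter>n. sumset d (thicken d (Suc n) A) (thicken d (Suc n) B))"
  define x0 where "x0 i = (if i < d then fst x i else 0)" for i
  have "\<exists>w. w \<in> fibre d (sumset d A B) (snd x) \<and> (\<forall>i. \<bar>w i - x0 i\<bar> \<le> 2 / real (Suc n))" for n
  proof (rule sumset_thicken_approx)
    show "x \<in> sumset d (thicken d (Suc n) A) (thicken d (Suc n) B)"
      using x by blast
  qed (unfold x0_def, blast)
  then obtain w where w: "\<And>n. w n \<in> fibre d (sumset d A B) (snd x)"
    and near: "\<And>n i. \<bar>w n i - x0 i\<bar> \<le> 2 / real (Suc n)"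
    by metis
  have "closed (fibre d (sumset d A B) (snd x))"
    using torus_closed_sumset[OF A B] by (simp add: torus_closed_iff)
  then have "x0 \<in> fibre d (sumset d A B) (snd x)"
    using w near by (rule closed_componentwise_approx)
  moreover have "tproj d x0 = fst x"
  proof -
    have "fst x \<in> torus d"
      using x sumset_subset_torus by fastforce
    then show ?thesis
      by (metis tproj_torus tproj_eq_iff x0_def diff_self Ints_0)
  qed
  ultimately show "x \<in> sumset d A B"
    by (simp add: fibre_def)
next
  fix x assume "x \<in> sumset d A B"
  moreover have "sumset d A B \<subseteq> sumset d (thicken d n A) (thicken d n B)" for n
    using A B by (intro sumset_mono subset_thicken) (auto simp: torus_closed_iff)
  ultimately show "x \<in> (\<Inter>n. sumset d (thicken d (Suc n) A) (thicken d (Suc n) B))"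
    by blast
qed

theorem lemma2p7:
  fixes d :: nat
    and A B :: "((nat \<Rightarrow> real) \<times> 'z::{ab_group_add, finite}) set"
  assumes "torus_closed d A" and "torus_closed d B"
  shows "(\<lambda>n. measure (haar d) (sumset d (thicken d (Suc n) A) (thicken d (Suc n) B)))
           \<longlonglongrightarrow> measure (haar d) (sumset d A B)"
proof -
  let ?S = "\<lambda>n. sumset d (thicken d (Suc n) A) (thicken d (Suc n) B)"
  have "range ?S \<subseteq> sets (haar d)"
    using assms by (auto intro!: sets_haar_torus_closed torus_closed_sumset torus_closed_thicken)
  moreover have "decseq ?S"
    by (intro decseq_SucI sumset_mono thicken_antimono) auto
  ultimately have "(\<lambda>n. measure (haar d) (?S n)) \<longlonglongrightarrow> measure (haar d) (\<Inter>n. ?S n)"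
    using prob_space_haar by (intro finite_measure.finite_Lim_measure_decseq) (auto simp: prob_space_def)
  then show ?thesis
    by (simp add: Inter_sumset_thicken[OF assms])
qed

end
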